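(* Let $n \ge 1$ and $m \ge 2$ be integers, and let $D_n^m$ be the graph obtained from two disjoint copies $K_{n,1}$, $K_{n,2}$ of the complete graph $K_n$ and a path $P_m$ on $m$ vertices by identifying one endpoint of $P_m$ with a vertex of $K_{n,1}$ and the other endpoint of $P_m$ with a vertex of $K_{n,2}$ (so $D_n^m$ has $2n+m-2$ vertices). Then $$\frac{2}{(2n+m-3)(m+1)} \le \lambda_2(D_n^m) \le \frac{12}{6(m-1)(n-1)+m(m-1)}.$$
   Context: All graphs are finite, simple and unweighted. For a graph $G$ with adjacency matrix $A$ and diagonal degree matrix $D$, the graph Laplacian is $L_G = D - A$, whose quadratic form is $x^T L_G x = \sum_{(a,b)\in E}(x(a)-x(b))^2$; its eigenvalues are ordered $0=\lambda_1 \le \lambda_2 \le \dots$, and $\lambda_2(G)$ denotes the second smallest eigenvalue of $L_G$. $P_m$ denotes the path graph with $m$ vertices. *)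

theory Defs
  imports "Jordan_Normal_Form.Char_Poly" "HOL-Computational_Algebra.Polynomial"
begin

text \<open>Simple graphs on vertex set {0..<N} given by a symmetric irreflexive
adjacency predicate.\<close>

definition degree_G :: "nat \<Rightarrow> (nat \<Rightarrow> nat \<Rightarrow> bool) \<Rightarrow> nat \<Rightarrow> nat" where
  "degree_G N adj i = card {j. j < N \<and> adj i j}"

definition laplacian :: "nat \<Rightarrow> (nat \<Rightarrow> nat \<Rightarrow> bool) \<Rightarrow> real mat" where
  "laplacian N adj = mat N N (\<lambda>(i,j). if i = j then real (degree_G N adj i)
                                     else if adj i j then -1 else 0)"

text \<open>Eigenvalues of a real matrix with algebraic multiplicity (real roots of the
characteristic polynomial), sorted increasingly; lambda_2 is the second one.
For a symmetric matrix all eigenvalues are real.\<close>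
definition lambda2 :: "real mat \<Rightarrow> real" where
  "lambda2 L = sorted_list_of_multiset (proots (char_poly L)) ! 1"

text \<open>The graph D_n^m on vertices {0..<2n+m-2}: first K_n on {0..<n};
the path P_m on vertices n-1, n, ..., n+m-2; second K_n on {n+m-2..<2n+m-2}.\<close>
definition Dnm_size :: "nat \<Rightarrow> nat \<Rightarrow> nat" where
  "Dnm_size n m = 2*n + m - 2"

definition Dnm_adj :: "nat \<Rightarrow> nat \<Rightarrow> nat \<Rightarrow> nat \<Rightarrow> bool" where
  "Dnm_adj n m i j \<longleftrightarrow> i < Dnm_size n m \<and> j < Dnm_size n m \<and> i \<noteq> j \<and>
     ((i < n \<and> j < n) \<or>
      (n + m - 2 \<le> i \<and> n + m - 2 \<le> j) \<or>
      (n - 1 \<le> i \<and> i \<le> n + m - 2 \<and> n - 1 \<le> j \<and> j \<le> n + m - 2 \<and>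
       (i = j + 1 \<or> j = i + 1)))"

end

theory Submission
  imports Defs "HOL-Analysis.Convex" "HOL-Analysis.Function_Topology"
begin

text \<open>Write \<open>E(x)\<close> for the sum of \<open>(x i - x j)\<^sup>2\<close> over the edges, so that \<open>E(x) = x\<^sup>T L x\<close>.
If \<open>E(x) = 0\<close> forces \<open>x\<close> to be constant, then \<open>0\<close> is a simple root of the characteristic
polynomial of \<open>L\<close>, and \<open>\<lambda>\<^sub>2\<close> is the minimum of the Rayleigh quotient \<open>E(x)/|x|\<^sup>2\<close> over
\<open>x \<bottom> 1\<close>; the minimum is attained, and the first variation shows that a minimiser is an
eigenvector. Hence a Poincare inequality \<open>|x|\<^sup>2 \<le> C E(x)\<close> on \<open>x \<bottom> 1\<close> gives
\<open>1/C \<le> \<lambda>\<^sub>2\<close>, and every test vector \<open>y \<bottom> 1\<close> gives \<open>\<lambda>\<^sub>2 \<le> E(y)/|y|\<^sup>2\<close>.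

In \<open>D\<^sub>n\<^sup>m\<close> any two vertices are joined in the spanning tree by at most one clique edge at each
end and a segment of the path, so a weighted Cauchy-Schwarz inequality gives
\<open>(x i - x j)\<^sup>2 \<le> (m+1) E(x)\<close>; summing over all pairs of vertices yields the Poincare
inequality with \<open>C = (2n+m-3)(m+1)/2\<close>. For the upper bound take the vector that increases
by 2 along each path edge and is constant on each clique: \<open>E(y) = 4(m-1)\<close> and
\<open>3|y|\<^sup>2 = 6(n-1)(m-1)\<^sup>2 + m(m-1)(m+1)\<close>.\<close>

section \<open>The Dirichlet energy of a graph\<close>

definition lap_op :: "nat \<Rightarrow> (nat \<Rightarrow> nat \<Rightarrow> bool) \<Rightarrow> (nat \<Rightarrow> real) \<Rightarrow> nat \<Rightarrow> real" where
  "lap_op N adj x i = (\<Sum>j<N. if adj i j then x i - x j else 0)"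

definition dirichlet_energy :: "nat \<Rightarrow> (nat \<Rightarrow> nat \<Rightarrow> bool) \<Rightarrow> (nat \<Rightarrow> real) \<Rightarrow> real" where
  "dirichlet_energy N adj x = (\<Sum>i<N. \<Sum>j<N. if adj i j then (x i - x j)^2 else 0) / 2"

lemma sum_lap_op_eq_0:
  assumes sym: "\<And>i j. adj i j = adj j i"
  shows "(\<Sum>i<N. lap_op N adj x i) = 0"
proof -
  have "(\<Sum>i<N. lap_op N adj x i)
      = (\<Sum>i<N. \<Sum>j<N. if adj i j then x i else 0) - (\<Sum>i<N. \<Sum>j<N. if adj i j then x j else 0)"
    unfolding lap_op_def by (simp add: sum_subtractf[symmetric] if_distrib cong: if_cong)
  also have "(\<Sum>i<N. \<Sum>j<N. if adj i j then x j else 0) = (\<Sum>j<N. \<Sum>i<N. if adj i j then x j else 0)"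
    by (rule sum.swap)
  also have "\<dots> = (\<Sum>i<N. \<Sum>j<N. if adj i j then x i else 0)"
    using sym by (simp cong: if_cong)
  finally show ?thesis by simp
qed

lemma sum_mult_lap_op:
  assumes sym: "\<And>i j. adj i j = adj j i"
  shows "(\<Sum>i<N. y i * lap_op N adj x i)
           = (\<Sum>i<N. \<Sum>j<N. if adj i j then (x i - x j) * (y i - y j) else 0) / 2"
proof -
  define A where "A = (\<Sum>i<N. \<Sum>j<N. if adj i j then y i * (x i - x j) else 0)"
  have A: "(\<Sum>i<N. y i * lap_op N adj x i) = A"
    unfolding A_def lap_op_def by (simp add: sum_distrib_left if_distrib cong: if_cong)
  have "A = (\<Sum>j<N. \<Sum>i<N. if adj i j then y i * (x i - x j) else 0)"
    unfolding A_def by (rule sum.swap)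
  also have "\<dots> = (\<Sum>i<N. \<Sum>j<N. if adj i j then - y j * (x i - x j) else 0)"
    using sym by (simp add: algebra_simps cong: if_cong)
  finally have A_swapped: "A = \<dots>" .
  have "2 * A = A + A" by simp
  also have "\<dots> = (\<Sum>i<N. \<Sum>j<N. if adj i j then (x i - x j) * (y i - y j) else 0)"
    apply (subst A_swapped) back
    unfolding A_def sum.distrib[symmetric] by (intro sum.cong refl) (auto simp: algebra_simps)
  finally show ?thesis using A by simp
qed

lemma sum_mult_lap_op_self:
  assumes "\<And>i j. adj i j = adj j i"
  shows "(\<Sum>i<N. x i * lap_op N adj x i) = dirichlet_energy N adj x"
  unfolding dirichlet_energy_def sum_mult_lap_op[OF assms] power2_eq_square ..

lemma lap_op_add_scaled: "lap_op N adj (\<lambda>i. x i + t * y i) i = lap_op N adj x i + t * lap_op N adj y i"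
proof -
  have "lap_op N adj x i + t * lap_op N adj y i
      = (\<Sum>j<N. (if adj i j then x i - x j else 0) + t * (if adj i j then y i - y j else 0))"
    unfolding lap_op_def by (simp add: sum.distrib sum_distrib_left)
  also have "\<dots> = lap_op N adj (\<lambda>i. x i + t * y i) i"
    unfolding lap_op_def by (intro sum.cong refl) (auto simp: algebra_simps)
  finally show ?thesis by simp
qed

lemma dirichlet_energy_nonneg: "0 \<le> dirichlet_energy N adj x"
  unfolding dirichlet_energy_def by (auto intro!: sum_nonneg divide_nonneg_nonneg)

lemma dirichlet_energy_cong:
  "(\<And>i. i < N \<Longrightarrow> x i = y i) \<Longrightarrow> dirichlet_energy N adj x = dirichlet_energy N adj y"
  unfolding dirichlet_energy_def by (intro arg_cong2[where f="(/)"] sum.cong refl) auto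

lemma dirichlet_energy_add_const: "dirichlet_energy N adj (\<lambda>i. x i + c) = dirichlet_energy N adj x"
proof -
  have "x i + c - (x j + c) = x i - x j" for i j by simp
  then show ?thesis unfolding dirichlet_energy_def by (simp only:)
qed

lemma dirichlet_energy_scale: "dirichlet_energy N adj (\<lambda>i. c * x i) = c^2 * dirichlet_energy N adj x"
proof -
  have "dirichlet_energy N adj (\<lambda>i. c * x i)
      = (\<Sum>i<N. \<Sum>j<N. c^2 * (if adj i j then (x i - x j)^2 else 0)) / 2"
    unfolding dirichlet_energy_def
    by (intro arg_cong2[where f="(/)"] sum.cong refl) (auto simp: power2_eq_square algebra_simps)
  then show ?thesis unfolding dirichlet_energy_def by (simp add: sum_distrib_left[symmetric])
qed

lemma continuous_on_dirichlet_energy: "continuous_on UNIV (dirichlet_energy N adj)"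
proof -
  have energy: "dirichlet_energy N adj
      = (\<lambda>x. (\<Sum>i<N. \<Sum>j<N. (if adj i j then 1 else 0) * (x i - x j)^2) / 2)"
    unfolding dirichlet_energy_def by (intro ext arg_cong2[where f="(/)"] sum.cong refl) auto
  have "continuous_on UNIV (\<lambda>x::nat \<Rightarrow> real. x i)" for i by simp
  then show ?thesis unfolding energy by (intro continuous_intros) auto
qed

lemma sum_edge_set_le_dirichlet_energy:
  assumes sym: "\<And>i j. adj i j = adj j i"
    and T: "T \<subseteq> {(i, j). i < j \<and> j < N \<and> adj i j}"
  shows "(\<Sum>e\<in>T. (x (fst e) - x (snd e))^2) \<le> dirichlet_energy N adj x"
proof -
  define g where "g e = (if adj (fst e) (snd e) then (x (fst e) - x (snd e))^2 else 0)" for e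
  define U where "U = {..<N} \<times> {..<N}"
  have energy: "dirichlet_energy N adj x = (\<Sum>e\<in>U. g e) / 2"
    unfolding dirichlet_energy_def U_def g_def sum.cartesian_product by (simp add: case_prod_beta)
  have TU: "T \<subseteq> U" "prod.swap ` T \<subseteq> U" using T unfolding U_def by auto
  have fin: "finite T" using finite_subset[OF TU(1)] unfolding U_def by auto
  have disj: "T \<inter> prod.swap ` T = {}"
  proof (rule equals0I)
    have lt: "i < j" if "(i, j) \<in> T" for i j using subsetD[OF T that] by simp
    fix e assume "e \<in> T \<inter> prod.swap ` T"
    then obtain i j where "(i, j) \<in> T" "(j, i) \<in> T" by auto
    with lt[of i j] lt[of j i] show False by simp
  qed
  have gT: "(\<Sum>e\<in>T. g e) = (\<Sum>e\<in>T. (x (fst e) - x (snd e))^2)"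
    using T unfolding g_def by (intro sum.cong) auto
  have g_swap: "(\<Sum>e\<in>prod.swap ` T. g e) = (\<Sum>e\<in>T. g e)"
    by (subst sum.reindex) (auto simp: g_def sym power2_commute intro!: sum.cong)
  have "2 * (\<Sum>e\<in>T. g e) = (\<Sum>e\<in>T \<union> prod.swap ` T. g e)"
    using disj fin by (subst sum.union_disjoint) (auto simp: g_swap)
  also have "\<dots> \<le> (\<Sum>e\<in>U. g e)"
    using TU by (intro sum_mono2) (auto simp: U_def g_def)
  finally show ?thesis using energy gT by simp
qed

lemma laplacian_carrier_mat: "laplacian N adj \<in> carrier_mat N N"
  unfolding laplacian_def by simp

lemma lap_op_eq_degree:
  "lap_op N adj x i = real (degree_G N adj i) * x i - (\<Sum>j<N. if adj i j then x j else 0)"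
proof -
  have "lap_op N adj x i = (\<Sum>j<N. if adj i j then x i else 0) - (\<Sum>j<N. if adj i j then x j else 0)"
    unfolding lap_op_def by (simp add: sum_subtractf[symmetric] if_distrib cong: if_cong)
  also have "(\<Sum>j<N. if adj i j then x i else 0) = (\<Sum>j\<in>{j. j < N \<and> adj i j}. x i)"
    by (simp add: sum.If_cases Int_def)
  finally show ?thesis unfolding degree_G_def by simp
qed

lemma laplacian_mult_vec_nth:
  assumes v: "v \<in> carrier_vec N" and i: "i < N" and irr: "\<not> adj i i"
  shows "(laplacian N adj *\<^sub>v v) $ i = lap_op N adj (\<lambda>k. v $ k) i"
proof -
  have "(laplacian N adj *\<^sub>v v) $ i
      = (\<Sum>j<N. (if i = j then real (degree_G N adj i) else if adj i j then -1 else 0) * v $ j)"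
    using v i unfolding laplacian_def by (simp add: scalar_prod_def lessThan_atLeast0)
  also have "\<dots> = (\<Sum>j<N. (if i = j then real (degree_G N adj i) * v $ j else 0)
                         + (if adj i j then - (v $ j) else 0))"
    using irr by (intro sum.cong refl) auto
  also have "\<dots> = real (degree_G N adj i) * v $ i - (\<Sum>j<N. if adj i j then v $ j else 0)"
    using i by (simp add: sum.distrib if_distrib[of uminus] sum_negf[symmetric] cong: if_cong)
  finally show ?thesis unfolding lap_op_eq_degree .
qed

lemma laplacian_eigenvector_lap_op:
  assumes irr: "\<And>i. \<not> adj i i" and v: "v \<in> carrier_vec N"
    and ev: "laplacian N adj *\<^sub>v v = \<mu> \<cdot>\<^sub>v v" and i: "i < N"
  shows "lap_op N adj (\<lambda>k. v $ k) i = \<mu> * v $ i"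
proof -
  have "lap_op N adj (\<lambda>k. v $ k) i = (laplacian N adj *\<^sub>v v) $ i"
    using laplacian_mult_vec_nth[of v N i adj, OF v i irr[of i]] by simp
  also have "\<dots> = \<mu> * v $ i" using ev v i by simp
  finally show ?thesis .
qed

lemma laplacian_eigenvector_energy:
  assumes sym: "\<And>i j. adj i j = adj j i" and irr: "\<And>i. \<not> adj i i"
    and v: "v \<in> carrier_vec N" and ev: "laplacian N adj *\<^sub>v v = \<mu> \<cdot>\<^sub>v v"
  shows "\<mu> * (\<Sum>i<N. (v $ i)^2) = dirichlet_energy N adj (\<lambda>k. v $ k)"
proof -
  have "dirichlet_energy N adj (\<lambda>k. v $ k) = (\<Sum>i<N. v $ i * lap_op N adj (\<lambda>k. v $ k) i)"
    by (rule sum_mult_lap_op_self[symmetric, of adj, OF sym])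
  also have "\<dots> = (\<Sum>i<N. v $ i * (\<mu> * v $ i))"
    by (intro sum.cong refl) (simp add: laplacian_eigenvector_lap_op[OF irr v ev])
  finally show ?thesis by (simp add: sum_distrib_left power2_eq_square algebra_simps)
qed

lemma laplacian_eigenvector_sum_eq_0:
  assumes sym: "\<And>i j. adj i j = adj j i" and irr: "\<And>i. \<not> adj i i"
    and v: "v \<in> carrier_vec N" and ev: "laplacian N adj *\<^sub>v v = \<mu> \<cdot>\<^sub>v v" and "\<mu> \<noteq> 0"
  shows "(\<Sum>i<N. v $ i) = 0"
proof -
  have "\<mu> * (\<Sum>i<N. v $ i) = (\<Sum>i<N. lap_op N adj (\<lambda>k. v $ k) i)"
    using laplacian_eigenvector_lap_op[OF irr v ev] by (simp add: sum_distrib_left)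
  then show ?thesis using sum_lap_op_eq_0[OF sym] \<open>\<mu> \<noteq> 0\<close> by simp
qed

section \<open>A simple zero of the characteristic polynomial\<close>

lemma char_poly_first_column_zero:
  fixes T :: "'a :: comm_ring_1 mat"
  assumes T: "T \<in> carrier_mat N N" and N: "0 < N" and col0: "\<And>i. i < N \<Longrightarrow> T $$ (i, 0) = 0"
  shows "char_poly T = [:0, 1:] * char_poly (mat_delete T 0 0)"
proof -
  define C where "C = char_poly_matrix T"
  have C: "C \<in> carrier_mat N N" unfolding C_def using T by simp
  have C0: "C $$ (i, 0) = (if i = 0 then [:0, 1:] else 0)" if "i < N" for i
    using that T N col0[OF that] unfolding C_def char_poly_matrix_def by auto
  have del: "mat_delete C 0 0 = char_poly_matrix (mat_delete T 0 0)"
    using T unfolding C_def char_poly_matrix_def mat_delete_def by (intro eq_matI) auto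
  have "char_poly T = (\<Sum>i<N. C $$ (i, 0) * cofactor C i 0)"
    unfolding char_poly_def C_def[symmetric] by (rule laplace_expansion_column[OF C N])
  also have "\<dots> = (\<Sum>i<N. if i = 0 then [:0, 1:] * cofactor C 0 0 else 0)"
    using C0 by (intro sum.cong refl) auto
  also have "\<dots> = [:0, 1:] * cofactor C 0 0" using N by simp
  finally show ?thesis unfolding cofactor_def del char_poly_def by simp
qed

text \<open>Conjugation by \<open>shear_mat N\<close> sends the constant vector to the first unit vector, so it
  turns a matrix annihilating the constants into one with zero first column.\<close>

definition shear_mat :: "nat \<Rightarrow> real mat" where
  "shear_mat N = mat N N (\<lambda>(i, j). if j = 0 \<or> i = j then 1 else 0)"

lemma shear_mat_carrier: "shear_mat N \<in> carrier_mat N N"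
  unfolding shear_mat_def by simp

lemma shear_mat_invertible:
  obtains S' where "S' \<in> carrier_mat N N" "S' * shear_mat N = 1\<^sub>m N" "shear_mat N * S' = 1\<^sub>m N"
proof -
  have "det (shear_mat N) = prod_list (diag_mat (shear_mat N))"
    by (rule det_lower_triangular[OF _ shear_mat_carrier]) (auto simp: shear_mat_def)
  also have "diag_mat (shear_mat N) = map (\<lambda>i. 1) [0..<N]"
    unfolding shear_mat_def diag_mat_def by simp
  finally have "det (shear_mat N) = 1" by (simp add: map_replicate_const)
  then have "shear_mat N \<in> Units (ring_mat TYPE(real) N ())"
    using det_non_zero_imp_unit[OF shear_mat_carrier[of N], of "()"] by simp
  then show ?thesis using that unfolding Units_def ring_mat_def by auto
qed

lemma shear_mat_mult_vec_nth:
  assumes y: "y \<in> carrier_vec N" and i: "i < N"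
  shows "(shear_mat N *\<^sub>v y) $ i = y $ 0 + (if i = 0 then 0 else y $ i)"
proof -
  obtain N' where N': "N = Suc N'" using i by (cases N) auto
  have "(shear_mat N *\<^sub>v y) $ i = (\<Sum>k<N. (if k = 0 \<or> i = k then 1 else 0) * y $ k)"
    using y i unfolding shear_mat_def by (simp add: scalar_prod_def lessThan_atLeast0)
  also have "\<dots> = y $ 0 + (\<Sum>k<N'. if i = Suc k then y $ Suc k else 0)"
    unfolding N' sum.lessThan_Suc_shift by (simp, intro sum.cong refl, simp)
  also have "(\<Sum>k<N'. if i = Suc k then y $ Suc k else 0) = (if i = 0 then 0 else y $ i)"
    using i N' by (cases i) (simp_all add: sum.delta)
  finally show ?thesis .
qed

lemma col_shear_mat_0: "0 < N \<Longrightarrow> col (shear_mat N) 0 = vec N (\<lambda>_. 1)"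
  unfolding shear_mat_def by (intro eq_vecI) auto

text \<open>If the minor had a kernel vector \<open>w\<close>, then \<open>z = (0, w)\<close> would satisfy
  \<open>L z = t \<one>\<close>; the entries of \<open>L z\<close> sum to \<open>0\<close>, so \<open>t = 0\<close>, and then \<open>z\<close> is constant, hence \<open>0\<close>.\<close>

lemma poly_char_poly_shear_minor_neq_0:
  fixes L T :: "real mat"
  assumes L: "L \<in> carrier_mat N N" and T: "T \<in> carrier_mat N N" and N: "0 < N"
    and LS: "L * shear_mat N = shear_mat N * T"
    and range_sum: "\<And>v. v \<in> carrier_vec N \<Longrightarrow> (\<Sum>i<N. (L *\<^sub>v v) $ i) = 0"
    and kernel: "\<And>v i. v \<in> carrier_vec N \<Longrightarrow> L *\<^sub>v v = 0\<^sub>v N \<Longrightarrow> i < N \<Longrightarrow> v $ i = v $ 0"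
  shows "poly (char_poly (mat_delete T 0 0)) 0 \<noteq> 0"
proof
  define D where "D = mat_delete T 0 0"
  have D: "D \<in> carrier_mat (N - 1) (N - 1)" unfolding D_def by (rule mat_delete_carrier[OF T])
  assume "poly (char_poly (mat_delete T 0 0)) 0 = 0"
  then have "eigenvalue D 0" using eigenvalue_root_char_poly[OF D] unfolding D_def by simp
  then obtain w where w: "w \<in> carrier_vec (N - 1)" and w0: "w \<noteq> 0\<^sub>v (N - 1)" and Dw: "D *\<^sub>v w = 0 \<cdot>\<^sub>v w"
    unfolding eigenvalue_def eigenvector_def using D by auto
  obtain N' where N': "N = Suc N'" using N by (cases N) auto
  define z where "z = vec N (\<lambda>i. if i = 0 then 0 else w $ (i - 1))"
  have z: "z \<in> carrier_vec N" unfolding z_def by simp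
  have Tz: "(T *\<^sub>v z) $ i = 0" if "0 < i" "i < N" for i
  proof -
    have "(T *\<^sub>v z) $ i = (\<Sum>k<N. T $$ (i, k) * z $ k)"
      using T z that by (simp add: scalar_prod_def lessThan_atLeast0)
    also have "\<dots> = (\<Sum>k<N'. T $$ (i, Suc k) * w $ k)"
      unfolding N' sum.lessThan_Suc_shift z_def using N' by simp
    also have "\<dots> = (D *\<^sub>v w) $ (i - 1)"
      using that w N' T unfolding D_def mat_delete_def by (simp add: scalar_prod_def lessThan_atLeast0)
    finally show ?thesis using Dw w that N' by simp
  qed
  define t where "t = (T *\<^sub>v z) $ 0"
  have Tz_carrier: "T *\<^sub>v z \<in> carrier_vec N" using T z by simp
  have Lz: "(L *\<^sub>v z) $ i = t" if i: "i < N" for i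
  proof -
    have "shear_mat N *\<^sub>v z = z"
      using z shear_mat_mult_vec_nth[OF z] by (intro eq_vecI) (auto simp: z_def carrier_matD[OF shear_mat_carrier])
    then have "L *\<^sub>v z = (L * shear_mat N) *\<^sub>v z"
      using L z shear_mat_carrier[of N] by simp
    also have "\<dots> = shear_mat N *\<^sub>v (T *\<^sub>v z)"
      unfolding LS using T z shear_mat_carrier[of N] by simp
    finally show ?thesis
      using shear_mat_mult_vec_nth[OF Tz_carrier i] Tz i unfolding t_def by auto
  qed
  have "real N * t = 0" using range_sum[OF z] Lz by simp
  then have "L *\<^sub>v z = 0\<^sub>v N" using N Lz L by (intro eq_vecI) auto
  then have "w $ k = 0" if "k < N - 1" for k
    using kernel[OF z, of "Suc k"] that N' unfolding z_def by simp
  then have "w = 0\<^sub>v (N - 1)" using w by (intro eq_vecI) auto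
  with w0 show False ..
qed

lemma order_0_char_poly_eq_1:
  fixes L :: "real mat"
  assumes L: "L \<in> carrier_mat N N" and N: "0 < N"
    and ones: "L *\<^sub>v vec N (\<lambda>_. 1) = 0\<^sub>v N"
    and range_sum: "\<And>v. v \<in> carrier_vec N \<Longrightarrow> (\<Sum>i<N. (L *\<^sub>v v) $ i) = 0"
    and kernel: "\<And>v i. v \<in> carrier_vec N \<Longrightarrow> L *\<^sub>v v = 0\<^sub>v N \<Longrightarrow> i < N \<Longrightarrow> v $ i = v $ 0"
  shows "order 0 (char_poly L) = 1"
proof -
  define S where "S = shear_mat N"
  have S: "S \<in> carrier_mat N N" unfolding S_def by (rule shear_mat_carrier)
  obtain S' where S': "S' \<in> carrier_mat N N" "S' * S = 1\<^sub>m N" "S * S' = 1\<^sub>m N"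
    unfolding S_def by (rule shear_mat_invertible)
  define T where "T = S' * L * S"
  have T: "T \<in> carrier_mat N N" unfolding T_def using S' L S by auto
  have "S * T = (S * S') * (L * S)"
    unfolding T_def using S S'(1) L by (simp add: assoc_mult_mat[of _ N N _ N _ N])
  also have "\<dots> = L * S" using S S'(1) L by (simp add: S'(3))
  finally have LS: "L * S = S * T" ..
  have "S * T * S' = L * S * S'" using LS by simp
  also have "\<dots> = L * (S * S')" using L S S' by simp
  also have "\<dots> = L" using S' L by simp
  finally have "L = S * T * S'" ..
  then have "similar_mat L T"
    unfolding similar_mat_def similar_mat_wit_def Let_def using L T S S' by blast
  then have cp: "char_poly L = char_poly T" by (rule char_poly_similar)
  have "T = S' * (L * S)" unfolding T_def using S' L S by (simp add: assoc_mult_mat[of _ N N _ N _ N])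
  then have "col T 0 = S' *\<^sub>v col (L * S) 0"
    using col_mult2[OF S'(1) mult_carrier_mat[OF L S] N] by simp
  also have "col (L * S) 0 = L *\<^sub>v col S 0" by (rule col_mult2[OF L S N])
  also have "\<dots> = 0\<^sub>v N" using ones unfolding S_def col_shear_mat_0[OF N] .
  finally have "col T 0 $ i = 0" if "i < N" for i using that S'(1) by simp
  then have "T $$ (i, 0) = 0" if "i < N" for i using that T by simp
  then have factor: "char_poly T = [:0, 1:] * char_poly (mat_delete T 0 0)"
    using char_poly_first_column_zero[OF T N] by blast
  have minor: "poly (char_poly (mat_delete T 0 0)) 0 \<noteq> 0"
    using poly_char_poly_shear_minor_neq_0[OF L T N LS[unfolded S_def] range_sum kernel] .
  then have "char_poly (mat_delete T 0 0) \<noteq> 0" by auto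
  then have "order 0 (char_poly L) = order 0 [:0, 1::real:] + order 0 (char_poly (mat_delete T 0 0))"
    unfolding cp factor by (intro order_mult) simp
  also have "\<dots> = 1"
    using minor order_power_n_n[of "0::real" 1] by (simp add: order_0I)
  finally show ?thesis .
qed

lemma order_0_char_poly_laplacian:
  assumes sym: "\<And>i j. adj i j = adj j i" and irr: "\<And>i. \<not> adj i i" and N: "0 < N"
    and conn: "\<And>x i. dirichlet_energy N adj x = 0 \<Longrightarrow> i < N \<Longrightarrow> x i = x 0"
  shows "order 0 (char_poly (laplacian N adj)) = 1"
proof (rule order_0_char_poly_eq_1[OF laplacian_carrier_mat N])
  show "laplacian N adj *\<^sub>v vec N (\<lambda>_. 1) = 0\<^sub>v N"
  proof (rule eq_vecI)
    fix i assume "i < dim_vec (0\<^sub>v N :: real vec)"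
    then show "(laplacian N adj *\<^sub>v vec N (\<lambda>_. 1)) $ i = 0\<^sub>v N $ i"
      by (auto simp: laplacian_mult_vec_nth[of _ N i adj, OF _ _ irr[of i]] lap_op_def intro!: sum.neutral)
  qed (simp add: laplacian_def)
  show "(\<Sum>i<N. (laplacian N adj *\<^sub>v v) $ i) = 0" if "v \<in> carrier_vec N" for v
    using laplacian_mult_vec_nth[of v N _ adj, OF that _ irr] sum_lap_op_eq_0[of adj, OF sym] by simp
  show "v $ i = v $ 0" if v: "v \<in> carrier_vec N" and "laplacian N adj *\<^sub>v v = 0\<^sub>v N" and "i < N" for v i
  proof -
    have "laplacian N adj *\<^sub>v v = 0 \<cdot>\<^sub>v v" using that by auto
    from laplacian_eigenvector_energy[of adj, OF sym irr v this]
    have "dirichlet_energy N adj (\<lambda>k. v $ k) = 0" by simp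
    then show ?thesis using conn \<open>i < N\<close> by blast
  qed
qed

section \<open>The Rayleigh quotient\<close>

lemma linear_coeff_eq_0_if_quadratic_nonneg:
  fixes a b :: real
  assumes nonneg: "\<And>t. 0 \<le> 2 * t * b + t^2 * a"
  shows "b = 0"
proof -
  define c where "c = \<bar>a\<bar> + 1"
  have c: "0 < c" "a - 2 * c < 0" unfolding c_def by (auto simp: abs_if)
  have "0 \<le> 2 * (- b / c) * b + (- b / c)^2 * a" by (rule nonneg)
  then have "0 \<le> (2 * (- b / c) * b + (- b / c)^2 * a) * c^2" by simp
  also have "\<dots> = b^2 * (a - 2 * c)" using c by (simp add: field_simps power2_eq_square)
  finally have "b^2 \<le> 0" using c by (simp add: zero_le_mult_iff)
  then show ?thesis by simp
qed

text \<open>Constraining all coordinates, also those \<open>\<ge> N\<close>, makes this set compact in the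
  product topology.\<close>

lemma compact_unit_sum_zero_box:
  "compact {x :: nat \<Rightarrow> real. (\<forall>i. x i \<in> {-1..1}) \<and> (\<Sum>i<N. x i) = 0 \<and> (\<Sum>i<N. (x i)^2) = 1}"
proof -
  have "compactin (product_topology (\<lambda>i. euclidean) UNIV) (PiE UNIV (\<lambda>i::nat. {-1..1::real}))"
    by (subst compactin_PiE) auto
  then have box: "compact (Pi UNIV (\<lambda>i::nat. {-1..1::real}))"
    unfolding euclidean_product_topology PiE_UNIV_domain by simp
  have coord: "continuous_on UNIV (\<lambda>x::nat \<Rightarrow> real. x i)" for i by simp
  have "continuous_on UNIV (\<lambda>x::nat \<Rightarrow> real. \<Sum>i<N. x i)"
    and "continuous_on UNIV (\<lambda>x::nat \<Rightarrow> real. \<Sum>i<N. (x i)^2)"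
    by (intro continuous_intros coord)+
  then have "closed {x :: nat \<Rightarrow> real. (\<Sum>i<N. x i) = 0 \<and> (\<Sum>i<N. (x i)^2) = 1}"
    by (intro closed_Collect_conj closed_Collect_eq continuous_on_const)
  from compact_Int_closed[OF box this] show ?thesis
    by (simp add: Pi_def Int_def)
qed

lemma normalized_vector:
  fixes z :: "nat \<Rightarrow> real"
  assumes pos: "0 < (\<Sum>i<N. (z i)^2)"
  defines "w \<equiv> \<lambda>i. if i < N then z i / sqrt (\<Sum>i<N. (z i)^2) else 0"
  shows "(\<Sum>i<N. (w i)^2) = 1"
    and "(\<Sum>i<N. w i) = (\<Sum>i<N. z i) / sqrt (\<Sum>i<N. (z i)^2)"
    and "w i \<in> {-1..1}"
    and "dirichlet_energy N adj w = dirichlet_energy N adj z / (\<Sum>i<N. (z i)^2)"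
proof -
  define G where "G = (\<Sum>i<N. (z i)^2)"
  have sqrt_G: "(sqrt G)^2 = G" using pos unfolding G_def by simp
  have "(\<Sum>i<N. (w i)^2) = (\<Sum>i<N. (z i)^2 / G)"
    unfolding w_def G_def[symmetric] by (intro sum.cong refl) (simp add: power_divide sqrt_G)
  also have "\<dots> = 1" using pos unfolding G_def by (simp add: sum_divide_distrib[symmetric])
  finally show norm: "(\<Sum>i<N. (w i)^2) = 1" .
  show "(\<Sum>i<N. w i) = (\<Sum>i<N. z i) / sqrt (\<Sum>i<N. (z i)^2)"
    unfolding w_def by (simp add: sum_divide_distrib)
  show "w i \<in> {-1..1}"
  proof (cases "i < N")
    case True
    then have "(w i)^2 \<le> 1" using norm member_le_sum[of i "{..<N}" "\<lambda>i. (w i)^2"] by simp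
    then show ?thesis by (simp add: abs_square_le_1 abs_le_iff)
  qed (simp add: w_def)
  have "dirichlet_energy N adj w = dirichlet_energy N adj (\<lambda>i. (1 / sqrt G) * z i)"
    unfolding w_def G_def by (rule dirichlet_energy_cong) simp
  then show "dirichlet_energy N adj w = dirichlet_energy N adj z / (\<Sum>i<N. (z i)^2)"
    unfolding dirichlet_energy_scale G_def[symmetric] by (simp add: power_divide sqrt_G)
qed

lemma rayleigh_minimizer_exists:
  fixes y :: "nat \<Rightarrow> real"
  assumes y: "(\<Sum>i<N. y i) = 0" "0 < (\<Sum>i<N. (y i)^2)"
  obtains x where "(\<Sum>i<N. x i) = 0" and "(\<Sum>i<N. (x i)^2) = 1"
    and "\<And>z. (\<Sum>i<N. z i) = 0 \<Longrightarrow>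
           dirichlet_energy N adj x * (\<Sum>i<N. (z i)^2) \<le> dirichlet_energy N adj z"
proof -
  define K where "K = {x :: nat \<Rightarrow> real. (\<forall>i. x i \<in> {-1..1}) \<and> (\<Sum>i<N. x i) = 0 \<and> (\<Sum>i<N. (x i)^2) = 1}"
  define nrm where "nrm z = (\<lambda>i. if i < N then z i / sqrt (\<Sum>i<N. (z i)^2) else 0)" for z :: "nat \<Rightarrow> real"
  have nrm_K: "nrm z \<in> K" if "(\<Sum>i<N. z i) = 0" "0 < (\<Sum>i<N. (z i)^2)" for z
    using normalized_vector(1-3)[OF that(2)] that(1) unfolding K_def nrm_def by simp
  have "K \<noteq> {}" using nrm_K[OF y] by blast
  from continuous_attains_inf[OF compact_unit_sum_zero_box[of N, folded K_def] this
      continuous_on_subset[OF continuous_on_dirichlet_energy subset_UNIV]]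
  obtain x where x: "x \<in> K" and minimal: "\<And>z. z \<in> K \<Longrightarrow> dirichlet_energy N adj x \<le> dirichlet_energy N adj z"
    by blast
  show ?thesis
  proof (rule that)
    show "(\<Sum>i<N. x i) = 0" "(\<Sum>i<N. (x i)^2) = 1" using x unfolding K_def by auto
    fix z :: "nat \<Rightarrow> real" assume z: "(\<Sum>i<N. z i) = 0"
    show "dirichlet_energy N adj x * (\<Sum>i<N. (z i)^2) \<le> dirichlet_energy N adj z"
    proof (cases "0 < (\<Sum>i<N. (z i)^2)")
      case True
      have "dirichlet_energy N adj x \<le> dirichlet_energy N adj z / (\<Sum>i<N. (z i)^2)"
        using minimal[OF nrm_K[OF z True]] normalized_vector(4)[OF True, where adj=adj]
        unfolding nrm_def by simp
      then show ?thesis using True by (simp add: le_divide_eq)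
    next
      case False
      moreover have "0 \<le> (\<Sum>i<N. (z i)^2)" by (intro sum_nonneg) simp
      ultimately show ?thesis using dirichlet_energy_nonneg[of N adj z] by simp
    qed
  qed
qed

lemma rayleigh_minimizer_first_variation:
  assumes sym: "\<And>i j. adj i j = adj j i"
    and x: "(\<Sum>i<N. x i) = 0" "(\<Sum>i<N. (x i)^2) = 1"
    and minimal: "\<And>z. (\<Sum>i<N. z i) = 0 \<Longrightarrow>
           dirichlet_energy N adj x * (\<Sum>i<N. (z i)^2) \<le> dirichlet_energy N adj z"
    and y: "(\<Sum>i<N. y i) = 0"
  shows "(\<Sum>i<N. y i * lap_op N adj x i) = dirichlet_energy N adj x * (\<Sum>i<N. x i * y i)"
proof -
  define \<mu> where "\<mu> = dirichlet_energy N adj x"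
  define b where "b = (\<Sum>i<N. y i * lap_op N adj x i) - \<mu> * (\<Sum>i<N. x i * y i)"
  define a where "a = dirichlet_energy N adj y - \<mu> * (\<Sum>i<N. (y i)^2)"
  have "0 \<le> 2 * t * b + t^2 * a" for t
  proof -
    define z where "z i = x i + t * y i" for i
    have "(\<Sum>i<N. z i) = 0"
      unfolding z_def using x(1) y by (simp add: sum.distrib sum_distrib_left[symmetric])
    then have "\<mu> * (\<Sum>i<N. (z i)^2) \<le> dirichlet_energy N adj z" unfolding \<mu>_def by (rule minimal)
    moreover have "(\<Sum>i<N. (z i)^2) = 1 + 2 * t * (\<Sum>i<N. x i * y i) + t^2 * (\<Sum>i<N. (y i)^2)"
      using x(2) unfolding z_def
      by (simp add: power2_sum sum.distrib sum_distrib_left power_mult_distrib algebra_simps)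
    moreover have "dirichlet_energy N adj z
        = \<mu> + 2 * t * (\<Sum>i<N. y i * lap_op N adj x i) + t^2 * dirichlet_energy N adj y"
    proof -
      have "dirichlet_energy N adj z = (\<Sum>i<N. z i * lap_op N adj z i)"
        by (rule sum_mult_lap_op_self[symmetric, of adj, OF sym])
      also have "\<dots> = (\<Sum>i<N. x i * lap_op N adj x i) + t * (\<Sum>i<N. x i * lap_op N adj y i)
          + t * (\<Sum>i<N. y i * lap_op N adj x i) + t^2 * (\<Sum>i<N. y i * lap_op N adj y i)"
        unfolding z_def lap_op_add_scaled
        by (simp add: sum.distrib sum_distrib_left algebra_simps power2_eq_square)
      also have "(\<Sum>i<N. x i * lap_op N adj y i) = (\<Sum>i<N. y i * lap_op N adj x i)"
        unfolding sum_mult_lap_op[of adj, OF sym]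
        by (intro arg_cong2[where f="(/)"] sum.cong refl) (auto simp: mult.commute)
      finally show ?thesis
        unfolding \<mu>_def sum_mult_lap_op_self[of adj, OF sym] by (simp add: algebra_simps)
    qed
    ultimately show ?thesis unfolding a_def b_def by (simp add: algebra_simps)
  qed
  then have "b = 0" by (rule linear_coeff_eq_0_if_quadratic_nonneg)
  then show ?thesis unfolding b_def \<mu>_def by simp
qed

lemma rayleigh_minimizer_eigenvector:
  assumes sym: "\<And>i j. adj i j = adj j i"
    and x: "(\<Sum>i<N. x i) = 0" "(\<Sum>i<N. (x i)^2) = 1"
    and minimal: "\<And>z. (\<Sum>i<N. z i) = 0 \<Longrightarrow>
           dirichlet_energy N adj x * (\<Sum>i<N. (z i)^2) \<le> dirichlet_energy N adj z"
    and i: "i < N"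
  shows "lap_op N adj x i = dirichlet_energy N adj x * x i"
proof -
  define \<mu> where "\<mu> = dirichlet_energy N adj x"
  define r where "r j = lap_op N adj x j - \<mu> * x j" for j
  have "(\<Sum>j<N. r j) = 0"
    unfolding r_def using sum_lap_op_eq_0[of adj, OF sym, of N x] x(1)
    by (simp add: sum_subtractf sum_distrib_left[symmetric])
  note first_variation = rayleigh_minimizer_first_variation[OF sym x minimal this]
  have "(\<Sum>j<N. (r j)^2) = (\<Sum>j<N. r j * lap_op N adj x j) - \<mu> * (\<Sum>j<N. x j * r j)"
    unfolding r_def
    by (simp add: power2_eq_square sum_subtractf sum_distrib_left sum.distrib algebra_simps)
  also have "\<dots> = 0" using first_variation unfolding \<mu>_def by simp
  finally have "r i = 0" using i by (simp add: sum_nonneg_eq_0_iff)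
  then show ?thesis unfolding r_def \<mu>_def by simp
qed

lemma laplacian_eigenvalue_le_rayleigh:
  assumes sym: "\<And>i j. adj i j = adj j i" and irr: "\<And>i. \<not> adj i i"
    and y: "(\<Sum>i<N. y i) = 0" "0 < (\<Sum>i<N. (y i)^2)"
  obtains x where "(\<Sum>i<N. x i) = 0" and "(\<Sum>i<N. (x i)^2) = 1"
    and "poly (char_poly (laplacian N adj)) (dirichlet_energy N adj x) = 0"
    and "dirichlet_energy N adj x * (\<Sum>i<N. (y i)^2) \<le> dirichlet_energy N adj y"
proof -
  obtain x where x: "(\<Sum>i<N. x i) = 0" "(\<Sum>i<N. (x i)^2) = 1"
    and minimal: "\<And>z. (\<Sum>i<N. z i) = 0 \<Longrightarrow>
           dirichlet_energy N adj x * (\<Sum>i<N. (z i)^2) \<le> dirichlet_energy N adj z"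
    using rayleigh_minimizer_exists[OF y] by blast
  define v where "v = vec N x"
  have v: "v \<in> carrier_vec N" unfolding v_def by simp
  have "laplacian N adj *\<^sub>v v = dirichlet_energy N adj x \<cdot>\<^sub>v v"
  proof (rule eq_vecI)
    fix i assume "i < dim_vec (dirichlet_energy N adj x \<cdot>\<^sub>v v)"
    then have i: "i < N" unfolding v_def by simp
    have "(laplacian N adj *\<^sub>v v) $ i = lap_op N adj (\<lambda>k. v $ k) i"
      by (rule laplacian_mult_vec_nth[of v N i adj, OF v i irr[of i]])
    also have "\<dots> = lap_op N adj x i"
      unfolding lap_op_def v_def using i by (intro sum.cong refl) auto
    also have "\<dots> = dirichlet_energy N adj x * x i"
      by (rule rayleigh_minimizer_eigenvector[OF sym x minimal i])
    finally show "(laplacian N adj *\<^sub>v v) $ i = (dirichlet_energy N adj x \<cdot>\<^sub>v v) $ i"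
      using i unfolding v_def by simp
  qed (simp add: laplacian_def v_def)
  moreover have "v \<noteq> 0\<^sub>v N"
  proof
    assume "v = 0\<^sub>v N"
    have "x i = 0" if "i < N" for i
    proof -
      have "x i = v $ i" using that unfolding v_def by simp
      then show ?thesis using \<open>v = 0\<^sub>v N\<close> that by simp
    qed
    then show False using x(2) by simp
  qed
  ultimately have "eigenvalue (laplacian N adj) (dirichlet_energy N adj x)"
    unfolding eigenvalue_def eigenvector_def using v laplacian_carrier_mat[of N adj] by auto
  then have "poly (char_poly (laplacian N adj)) (dirichlet_energy N adj x) = 0"
    using eigenvalue_root_char_poly[OF laplacian_carrier_mat] by simp
  with x minimal[OF y(1)] show ?thesis using that by blast
qed

section \<open>The second smallest root\<close>

lemma laplacian_char_poly_root_eigenvector: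
  assumes sym: "\<And>i j. adj i j = adj j i" and irr: "\<And>i. \<not> adj i i"
    and root: "poly (char_poly (laplacian N adj)) r = 0"
  obtains x where "0 < (\<Sum>i<N. (x i)^2)" and "r * (\<Sum>i<N. (x i)^2) = dirichlet_energy N adj x"
    and "r \<noteq> 0 \<Longrightarrow> (\<Sum>i<N. x i) = 0"
proof -
  have "eigenvalue (laplacian N adj) r"
    using root eigenvalue_root_char_poly[OF laplacian_carrier_mat] by simp
  then obtain v where v: "v \<in> carrier_vec N" "v \<noteq> 0\<^sub>v N" and ev: "laplacian N adj *\<^sub>v v = r \<cdot>\<^sub>v v"
    unfolding eigenvalue_def eigenvector_def using laplacian_carrier_mat[of N adj] by auto
  obtain i where i: "i < N" "v $ i \<noteq> 0" using v by (metis eq_vecI carrier_vecD index_zero_vec)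
  have "0 < (v $ i)^2" using i by simp
  also have "(v $ i)^2 \<le> (\<Sum>i<N. (v $ i)^2)" using i by (intro member_le_sum) auto
  finally show ?thesis
    using that[of "\<lambda>k. v $ k"] laplacian_eigenvector_energy[of adj, OF sym irr v(1) ev]
      laplacian_eigenvector_sum_eq_0[of adj, OF sym irr v(1) ev] by blast
qed

lemma second_sorted_root:
  fixes p :: "real poly"
  assumes p: "p \<noteq> 0" and simple: "order 0 p = 1" and nonneg: "\<And>r. poly p r = 0 \<Longrightarrow> 0 \<le> r"
    and \<mu>: "poly p \<mu> = 0" "\<mu> \<noteq> 0"
  shows "poly p (sorted_list_of_multiset (proots p) ! 1) = 0"
    and "sorted_list_of_multiset (proots p) ! 1 \<noteq> 0"
    and "sorted_list_of_multiset (proots p) ! 1 \<le> \<mu>"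
proof -
  define xs where "xs = sorted_list_of_multiset (proots p)"
  have sorted: "sorted xs" unfolding xs_def by simp
  have roots: "set xs = {r. poly p r = 0}" using p unfolding xs_def by simp
  have count0: "count (mset xs) 0 = 1" using p simple unfolding xs_def by simp
  have "0 \<in> set xs" using count0 by (metis count_inI one_neq_zero set_mset_mset)
  moreover have "\<mu> \<in> set xs" using roots \<mu>(1) by simp
  ultimately have "card {0, \<mu>} \<le> length xs"
    using card_mono[of "set xs" "{0, \<mu>}"] card_length[of xs] by auto
  then obtain a b rest where xs: "xs = a # b # rest"
    using \<mu>(2) by (cases xs; cases "tl xs") auto
  obtain k where k: "k < length xs" "xs ! k = 0" using \<open>0 \<in> set xs\<close> by (metis in_set_conv_nth)
  have "a \<le> 0" using sorted_nth_mono[OF sorted, of 0 k] k xs by simp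
  moreover have "0 \<le> a" using nonneg roots xs by auto
  ultimately have "a = 0" by simp
  then show b0: "xs ! 1 \<noteq> 0" using count0 xs by auto
  show "poly p (xs ! 1) = 0" using roots xs by auto
  obtain l where l: "l < length xs" "xs ! l = \<mu>" using \<open>\<mu> \<in> set xs\<close> by (metis in_set_conv_nth)
  have "l \<noteq> 0"
  proof
    assume "l = 0"
    then show False using l xs \<open>a = 0\<close> \<mu>(2) by simp
  qed
  then show "xs ! 1 \<le> \<mu>" using sorted_nth_mono[OF sorted, of 1 l] l by simp
qed

lemma poincare_imp_energy_0_const:
  assumes poincare: "\<And>x. (\<Sum>i<N. x i) = 0 \<Longrightarrow> (\<Sum>i<N. (x i)^2) \<le> C * dirichlet_energy N adj x"
    and energy: "dirichlet_energy N adj x = 0" and i: "i < N"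
  shows "x i = x 0"
proof -
  define c where "c = (\<Sum>j<N. x j) / N"
  define x' where "x' j = x j + (- c)" for j
  have "real N \<noteq> 0" using i by simp
  then have "(\<Sum>j<N. x' j) = 0" unfolding x'_def c_def by (simp add: sum_subtractf)
  moreover have "dirichlet_energy N adj x' = 0"
    unfolding x'_def dirichlet_energy_add_const energy ..
  ultimately have "(\<Sum>j<N. (x' j)^2) \<le> 0" using poincare[of x'] by simp
  then have "(\<Sum>j<N. (x' j)^2) = 0" by (intro antisym sum_nonneg) simp_all
  then have "x' j = 0" if "j < N" for j using that by (simp add: sum_nonneg_eq_0_iff)
  from this[of i] this[of 0] show ?thesis using i unfolding x'_def by simp
qed

lemma laplacian_char_poly_root_bounds:
  assumes sym: "\<And>i j. adj i j = adj j i" and irr: "\<And>i. \<not> adj i i" and C: "0 < C"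
    and poincare: "\<And>x. (\<Sum>i<N. x i) = 0 \<Longrightarrow> (\<Sum>i<N. (x i)^2) \<le> C * dirichlet_energy N adj x"
    and root: "poly (char_poly (laplacian N adj)) r = 0"
  shows "0 \<le> r" and "r \<noteq> 0 \<Longrightarrow> 1 / C \<le> r"
proof -
  obtain x where G: "0 < (\<Sum>i<N. (x i)^2)" and E: "r * (\<Sum>i<N. (x i)^2) = dirichlet_energy N adj x"
    and sum0: "r \<noteq> 0 \<Longrightarrow> (\<Sum>i<N. x i) = 0"
    using laplacian_char_poly_root_eigenvector[OF sym irr root] by blast
  have "0 \<le> r * (\<Sum>i<N. (x i)^2)" using E dirichlet_energy_nonneg[of N adj x] by simp
  then show "0 \<le> r" using G by (simp add: zero_le_mult_iff)
  assume "r \<noteq> 0"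
  have "1 * (\<Sum>i<N. (x i)^2) \<le> (C * r) * (\<Sum>i<N. (x i)^2)"
    using poincare[OF sum0[OF \<open>r \<noteq> 0\<close>]] E by (simp add: mult.assoc)
  then have "1 \<le> C * r" using G by (simp only: mult_le_cancel_right_pos)
  then show "1 / C \<le> r" using C by (simp add: divide_le_eq mult.commute)
qed

lemma lambda2_laplacian_bounds:
  assumes sym: "\<And>i j. adj i j = adj j i" and irr: "\<And>i. \<not> adj i i" and C: "0 < C"
    and poincare: "\<And>x. (\<Sum>i<N. x i) = 0 \<Longrightarrow> (\<Sum>i<N. (x i)^2) \<le> C * dirichlet_energy N adj x"
    and y: "(\<Sum>i<N. y i) = 0" "0 < (\<Sum>i<N. (y i)^2)"
  shows "1 / C \<le> lambda2 (laplacian N adj)"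
    and "lambda2 (laplacian N adj) \<le> dirichlet_energy N adj y / (\<Sum>i<N. (y i)^2)"
proof -
  define p where "p = char_poly (laplacian N adj)"
  have N: "0 < N" using y(2) by (cases N) auto
  have "coeff p N = 1"
    using degree_monic_char_poly[OF laplacian_carrier_mat[of N adj]] unfolding p_def by simp
  then have p: "p \<noteq> 0" by auto
  have simple: "order 0 p = 1" unfolding p_def
    using order_0_char_poly_laplacian[OF sym irr N poincare_imp_energy_0_const[OF poincare]] .
  note root_bounds = laplacian_char_poly_root_bounds[of adj, OF sym irr C poincare, folded p_def]
  obtain x where x: "(\<Sum>i<N. x i) = 0" "(\<Sum>i<N. (x i)^2) = 1"
    and root: "poly p (dirichlet_energy N adj x) = 0"
    and rayleigh: "dirichlet_energy N adj x * (\<Sum>i<N. (y i)^2) \<le> dirichlet_energy N adj y"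
    using laplacian_eigenvalue_le_rayleigh[of adj, OF sym irr y] unfolding p_def by blast
  have "dirichlet_energy N adj x \<noteq> 0" using poincare[OF x(1)] x(2) by auto
  note second = second_sorted_root[OF p simple root_bounds(1) root this]
  show "1 / C \<le> lambda2 (laplacian N adj)"
    unfolding lambda2_def p_def[symmetric] using root_bounds second(1,2) by blast
  show "lambda2 (laplacian N adj) \<le> dirichlet_energy N adj y / (\<Sum>i<N. (y i)^2)"
  proof -
    have "dirichlet_energy N adj x \<le> dirichlet_energy N adj y / (\<Sum>i<N. (y i)^2)"
      using rayleigh y(2) by (simp add: le_divide_eq)
    with second(3) show ?thesis unfolding lambda2_def p_def[symmetric] by simp
  qed
qed

lemma sum_lessThan_add:
  fixes a b :: nat
  shows "(\<Sum>i<a + b. f i) = (\<Sum>i<a. f i) + (\<Sum>i<b. f (i + a))"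
  by (induction b) (auto simp: add.commute add.left_commute)

lemma square_diff_le_telescoping:
  fixes x :: "nat \<Rightarrow> real"
  assumes "p \<le> q"
  shows "(x q - x p)^2 \<le> real (q - p) * (\<Sum>k\<in>{p..<q}. (x (Suc k) - x k)^2)"
proof -
  have "(x q - x p)^2 = (\<Sum>k\<in>{p..<q}. 1 * (x (Suc k) - x k))^2"
    using assms by (simp add: sum_Suc_diff')
  also have "\<dots> \<le> (\<Sum>k\<in>{p..<q}. 1^2) * (\<Sum>k\<in>{p..<q}. (x (Suc k) - x k)^2)"
    by (rule Cauchy_Schwarz_ineq_sum)
  finally show ?thesis by simp
qed

lemma square_sum3_le:
  fixes u v w k :: real
  assumes k: "0 < k"
  shows "(u + v + w)^2 \<le> (k + 2) * (u^2 + v^2 / k + w^2)"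
proof -
  have "(k + 2) * (k * u^2 + v^2 + k * w^2) - k * (u + v + w)^2
      = (k * u - v)^2 + (k * w - v)^2 + k * (u - w)^2"
    by (simp add: power2_eq_square algebra_simps)
  also have "\<dots> \<ge> 0" using k by simp
  finally have "k * (u + v + w)^2 \<le> (k + 2) * (k * u^2 + v^2 + k * w^2)" by simp
  also have "\<dots> = k * ((k + 2) * (u^2 + v^2 / k + w^2))"
    using k by (simp add: field_simps)
  finally show ?thesis using k by simp
qed

lemma sum_squares_le_of_pairwise_bound:
  fixes x :: "nat \<Rightarrow> real"
  assumes sum0: "(\<Sum>i<N. x i) = 0"
    and pair: "\<And>i j. i < N \<Longrightarrow> j < N \<Longrightarrow> i \<noteq> j \<Longrightarrow> (x i - x j)^2 \<le> e"
  shows "(\<Sum>i<N. (x i)^2) \<le> real (N - 1) * e / 2"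
proof (cases "N = 0")
  case False
  have "(\<Sum>i<N. \<Sum>j<N. (x i - x j)^2)
      = 2 * real N * (\<Sum>i<N. (x i)^2) - 2 * (\<Sum>i<N. x i) * (\<Sum>j<N. x j)"
    by (simp add: power2_diff sum.distrib sum_subtractf sum_distrib_left sum_distrib_right algebra_simps)
  then have "real N * (2 * (\<Sum>i<N. (x i)^2)) = (\<Sum>i<N. \<Sum>j<N. (x i - x j)^2)"
    using sum0 by simp
  also have "\<dots> \<le> (\<Sum>i<N. \<Sum>j\<in>{..<N} - {i}. e)"
  proof (rule sum_mono)
    fix i assume i: "i \<in> {..<N}"
    have "(\<Sum>j<N. (x i - x j)^2) = (\<Sum>j\<in>{..<N} - {i}. (x i - x j)^2)"
      using i by (intro sum.mono_neutral_right) auto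
    also have "\<dots> \<le> (\<Sum>j\<in>{..<N} - {i}. e)" using i pair by (intro sum_mono) auto
    finally show "(\<Sum>j<N. (x i - x j)^2) \<le> (\<Sum>j\<in>{..<N} - {i}. e)" .
  qed
  also have "\<dots> = real N * (real (N - 1) * e)" using False by (simp add: of_nat_diff)
  finally have "2 * (\<Sum>i<N. (x i)^2) \<le> real (N - 1) * e"
    using False by (simp only: mult_le_cancel_left_pos of_nat_0_less_iff gr0I)
  then show ?thesis by simp
qed simp

section \<open>The graph \<open>D\<^sub>n\<^sup>m\<close>\<close>

lemma Dnm_adj_sym: "Dnm_adj n m i j = Dnm_adj n m j i"
  unfolding Dnm_adj_def by auto

lemma Dnm_adj_irrefl: "\<not> Dnm_adj n m i i"
  unfolding Dnm_adj_def by auto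

definition Dnm_path_proj :: "nat \<Rightarrow> nat \<Rightarrow> nat \<Rightarrow> nat" where
  "Dnm_path_proj n m k = min (max k (n - 1)) (n + m - 2)"

definition Dnm_path_edge :: "nat \<Rightarrow> nat \<Rightarrow> nat \<Rightarrow> nat \<Rightarrow> bool" where
  "Dnm_path_edge n m i j \<longleftrightarrow> n - 1 \<le> i \<and> i < n + m - 2 \<and> j = Suc i"

definition Dnm_test :: "nat \<Rightarrow> nat \<Rightarrow> nat \<Rightarrow> real" where
  "Dnm_test n m i = 2 * real (Dnm_path_proj n m i) - real (2 * n + m - 3)"

context
  fixes n m :: nat
  assumes n: "1 \<le> n" and m: "2 \<le> m"
begin

lemma Dnm_spanning_tree_energy:
  "(\<Sum>k<Dnm_size n m. (x k - x (Dnm_path_proj n m k))^2)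
     + (\<Sum>k\<in>{n - 1..<n + m - 2}. (x (Suc k) - x k)^2)
     \<le> dirichlet_energy (Dnm_size n m) (Dnm_adj n m) x"
proof -
  define a b N where "a = n - 1" and "b = n + m - 2" and "N = Dnm_size n m"
  have ab: "a < b" "b < N" using n m unfolding a_def b_def N_def Dnm_size_def by auto
  define leaves where "leaves = {..<N} - {a..b}"
  define leaf_edge where "leaf_edge k = (if k < a then (k, a) else (b, k))" for k
  define path_edge where "path_edge k = (k, Suc k)" for k :: nat
  define f where "f e = (x (fst e) - x (snd e))^2" for e :: "nat \<times> nat"
  have "(\<Sum>k<N. (x k - x (Dnm_path_proj n m k))^2) = (\<Sum>k\<in>leaves. (x k - x (Dnm_path_proj n m k))^2)"
    using m by (intro sum.mono_neutral_right) (auto simp: leaves_def Dnm_path_proj_def a_def b_def)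
  also have "\<dots> = (\<Sum>k\<in>leaves. f (leaf_edge k))"
    using m by (intro sum.cong refl)
      (auto simp: leaves_def leaf_edge_def f_def Dnm_path_proj_def a_def b_def power2_commute)
  also have "\<dots> = (\<Sum>e\<in>leaf_edge ` leaves. f e)"
    using ab by (subst sum.reindex) (auto simp: inj_on_def leaf_edge_def leaves_def)
  finally have leaves_sum: "(\<Sum>k<N. (x k - x (Dnm_path_proj n m k))^2) = (\<Sum>e\<in>leaf_edge ` leaves. f e)" .
  have path_sum: "(\<Sum>k\<in>{a..<b}. (x (Suc k) - x k)^2) = (\<Sum>e\<in>path_edge ` {a..<b}. f e)"
    by (subst sum.reindex) (auto simp: inj_on_def path_edge_def f_def power2_commute)
  have disjoint: "leaf_edge ` leaves \<inter> path_edge ` {a..<b} = {}"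
    by (auto simp: leaves_def leaf_edge_def path_edge_def)
  have "(\<Sum>e\<in>leaf_edge ` leaves \<union> path_edge ` {a..<b}. f e) \<le> dirichlet_energy N (Dnm_adj n m) x"
    unfolding f_def
  proof (rule sum_edge_set_le_dirichlet_energy)
    show "Dnm_adj n m i j = Dnm_adj n m j i" for i j by (rule Dnm_adj_sym)
    show "leaf_edge ` leaves \<union> path_edge ` {a..<b} \<subseteq> {(i, j). i < j \<and> j < N \<and> Dnm_adj n m i j}"
      using n m
      by (auto simp: leaves_def leaf_edge_def path_edge_def a_def b_def N_def Dnm_adj_def Dnm_size_def)
  qed
  then show ?thesis
    using leaves_sum path_sum disjoint unfolding a_def b_def N_def leaves_def
    by (simp add: sum.union_disjoint)
qed

lemma Dnm_path_square_diff_le: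
  assumes "n - 1 \<le> p" and "p \<le> q" and "q \<le> n + m - 2"
  shows "(x q - x p)^2 \<le> real (m - 1) * (\<Sum>k\<in>{n - 1..<n + m - 2}. (x (Suc k) - x k)^2)"
proof -
  have "(x q - x p)^2 \<le> real (q - p) * (\<Sum>k\<in>{p..<q}. (x (Suc k) - x k)^2)"
    using assms(2) by (rule square_diff_le_telescoping)
  also have "\<dots> \<le> real (m - 1) * (\<Sum>k\<in>{n - 1..<n + m - 2}. (x (Suc k) - x k)^2)"
  proof (rule mult_mono)
    show "real (q - p) \<le> real (m - 1)" using assms n by simp
    show "(\<Sum>k\<in>{p..<q}. (x (Suc k) - x k)^2) \<le> (\<Sum>k\<in>{n - 1..<n + m - 2}. (x (Suc k) - x k)^2)"
      using assms by (intro sum_mono2) auto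
  qed (auto intro: sum_nonneg)
  finally show ?thesis .
qed

lemma Dnm_square_diff_le_energy:
  assumes i: "i < Dnm_size n m" and j: "j < Dnm_size n m"
  shows "(x i - x j)^2 \<le> real (m + 1) * dirichlet_energy (Dnm_size n m) (Dnm_adj n m) x"
proof (cases "i = j")
  case True
  then show ?thesis using dirichlet_energy_nonneg[of "Dnm_size n m" "Dnm_adj n m" x] by simp
next
  case False
  define p where "p = Dnm_path_proj n m"
  define r where "r l = (x l - x (p l))^2" for l
  define S where "S = (\<Sum>k\<in>{n - 1..<n + m - 2}. (x (Suc k) - x k)^2)"
  define k where "k = real (m - 1)"
  have k: "0 < k" "k + 2 = real (m + 1)" unfolding k_def using m by auto
  have "r i + r j = (\<Sum>l\<in>{i, j}. r l)" using False by simp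
  also have "\<dots> \<le> (\<Sum>l<Dnm_size n m. r l)" using i j by (intro sum_mono2) (auto simp: r_def)
  finally have tree: "r i + S + r j \<le> dirichlet_energy (Dnm_size n m) (Dnm_adj n m) x"
    using Dnm_spanning_tree_energy[of x] unfolding r_def S_def p_def by linarith
  have on_path: "n - 1 \<le> p l" "p l \<le> n + m - 2" for l
    unfolding p_def Dnm_path_proj_def using n m by auto
  have "(x (p i) - x (p j))^2 \<le> k * S"
  proof (cases "p i \<le> p j")
    case True
    then show ?thesis
      using Dnm_path_square_diff_le[OF on_path(1) True on_path(2)] unfolding k_def S_def
      by (simp add: power2_commute)
  next
    case False
    then have "p j \<le> p i" by simp
    then show ?thesis
      using Dnm_path_square_diff_le[OF on_path(1)[of j] _ on_path(2)[of i]] unfolding k_def S_def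
      by simp
  qed
  then have path: "(x (p i) - x (p j))^2 / k \<le> S" using k by (simp add: divide_le_eq mult.commute)
  have "(x i - x j)^2 = ((x i - x (p i)) + (x (p i) - x (p j)) + (x (p j) - x j))^2" by simp
  also have "\<dots> \<le> (k + 2) * ((x i - x (p i))^2 + (x (p i) - x (p j))^2 / k + (x (p j) - x j)^2)"
    by (rule square_sum3_le[OF k(1)])
  also have "(x (p j) - x j)^2 = r j" unfolding r_def by (rule power2_commute)
  also have "(x i - x (p i))^2 = r i" unfolding r_def ..
  also have "(k + 2) * (r i + (x (p i) - x (p j))^2 / k + r j) \<le> (k + 2) * (r i + S + r j)"
    using path k by (intro mult_left_mono) auto
  also have "\<dots> \<le> (k + 2) * dirichlet_energy (Dnm_size n m) (Dnm_adj n m) x"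
    using tree k by (intro mult_left_mono) auto
  finally show ?thesis unfolding k(2) .
qed

lemma Dnm_poincare:
  assumes "(\<Sum>i<Dnm_size n m. x i) = 0"
  shows "(\<Sum>i<Dnm_size n m. (x i)^2)
           \<le> real (2 * n + m - 3) * real (m + 1) / 2 * dirichlet_energy (Dnm_size n m) (Dnm_adj n m) x"
proof -
  have "(x i - x j)^2 \<le> real (m + 1) * dirichlet_energy (Dnm_size n m) (Dnm_adj n m) x"
    if "i < Dnm_size n m" "j < Dnm_size n m" "i \<noteq> j" for i j
    using that(1,2) by (rule Dnm_square_diff_le_energy)
  from sum_squares_le_of_pairwise_bound[OF assms this]
  have "(\<Sum>i<Dnm_size n m. (x i)^2)
          \<le> real (Dnm_size n m - 1) * (real (m + 1) * dirichlet_energy (Dnm_size n m) (Dnm_adj n m) x) / 2" .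
  moreover have "Dnm_size n m - 1 = 2 * n + m - 3" unfolding Dnm_size_def using n m by simp
  ultimately show ?thesis by simp
qed

lemma Dnm_test_reflect:
  assumes "i < Dnm_size n m"
  shows "Dnm_test n m (Dnm_size n m - Suc i) = - Dnm_test n m i"
proof -
  have "Dnm_path_proj n m (Dnm_size n m - Suc i) = (2 * n + m - 3) - Dnm_path_proj n m i"
    and "Dnm_path_proj n m i \<le> 2 * n + m - 3"
    using assms n m unfolding Dnm_path_proj_def Dnm_size_def by (auto simp: min_def max_def)
  then show ?thesis unfolding Dnm_test_def by (simp add: of_nat_diff)
qed

lemma Dnm_test_sum: "(\<Sum>i<Dnm_size n m. Dnm_test n m i) = 0"
proof -
  have "(\<Sum>i<Dnm_size n m. Dnm_test n m i) = (\<Sum>i<Dnm_size n m. Dnm_test n m (Dnm_size n m - Suc i))"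
    using sum.atLeastLessThan_rev[of "Dnm_test n m" 0 "Dnm_size n m"] by (simp add: lessThan_atLeast0)
  also have "\<dots> = - (\<Sum>i<Dnm_size n m. Dnm_test n m i)"
    by (simp add: Dnm_test_reflect sum_negf[symmetric])
  finally show ?thesis by simp
qed

lemma Dnm_test_sum_squares:
  "3 * (\<Sum>i<Dnm_size n m. (Dnm_test n m i)^2)
     = 6 * real (n - 1) * real (m - 1)^2 + real m * real (m - 1) * real (m + 1)"
proof -
  define a b where "a = n - 1" and "b = n + m - 2"
  have nat: "b = a + (m - 1)" "Dnm_size n m = a + m + a" "2 * n + m - 3 = a + b" "Suc b = a + m"
    using n m unfolding a_def b_def Dnm_size_def by auto
  have t: "Dnm_test n m i = 2 * real (Dnm_path_proj n m i) - (real a + real b)" for i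
    unfolding Dnm_test_def nat(3) by simp
  have left: "Dnm_test n m i = - real (m - 1)" if "i < a" for i
    using that unfolding t Dnm_path_proj_def a_def[symmetric] b_def[symmetric] nat(1) by simp
  have path: "Dnm_test n m (k + a) = 2 * real k - real (m - 1)" if "k < m" for k
    using that unfolding t Dnm_path_proj_def a_def[symmetric] b_def[symmetric] nat(1) by simp
  have right: "Dnm_test n m (k + (a + m)) = real (m - 1)" for k
    unfolding t Dnm_path_proj_def a_def[symmetric] b_def[symmetric] nat(1) by simp
  have sum_squares_shifted: "3 * (\<Sum>k<l. (2 * real k - c)^2)
      = 2 * (real l - 1) * real l * (2 * real l - 1) - 6 * c * real l * (real l - 1) + 3 * real l * c^2"
    for l :: nat and c :: real
    by (induction l) (auto simp: algebra_simps power2_eq_square)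
  have "3 * (\<Sum>i<Dnm_size n m. (Dnm_test n m i)^2)
      = 3 * (\<Sum>i<a. (Dnm_test n m i)^2) + 3 * (\<Sum>k<m. (Dnm_test n m (k + a))^2)
        + 3 * (\<Sum>k<a. (Dnm_test n m (k + (a + m)))^2)"
    unfolding nat(2) sum_lessThan_add by (simp add: algebra_simps)
  also have "\<dots> = 6 * real a * real (m - 1)^2 + real m * real (m - 1) * real (m + 1)"
    using sum_squares_shifted[where l = m and c = "real (m - 1)"] m
    by (simp add: left path right of_nat_diff power2_eq_square algebra_simps)
  finally show ?thesis unfolding a_def .
qed

lemma Dnm_test_sum_squares_pos: "0 < (\<Sum>i<Dnm_size n m. (Dnm_test n m i)^2)"
proof -
  have "0 < real m * real (m - 1) * real (m + 1)" using m by simp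
  moreover have "0 \<le> 6 * real (n - 1) * real (m - 1)^2" by simp
  ultimately show ?thesis using Dnm_test_sum_squares by linarith
qed

lemma Dnm_test_adj_square_diff:
  "(if Dnm_adj n m i j then (Dnm_test n m i - Dnm_test n m j)^2 else 0)
     = 4 * (if Dnm_path_edge n m i j then 1 else 0) + 4 * (if Dnm_path_edge n m j i then 1 else 0)"
proof -
  have path_edge: "Dnm_adj n m i j \<and> Dnm_path_proj n m i = i \<and> Dnm_path_proj n m j = j"
    if "Dnm_path_edge n m i j \<or> Dnm_path_edge n m j i"
    using that n m unfolding Dnm_path_edge_def Dnm_adj_def Dnm_size_def Dnm_path_proj_def by auto
  have clique_edge: "Dnm_path_proj n m i = Dnm_path_proj n m j"
    if "Dnm_adj n m i j" "\<not> Dnm_path_edge n m i j" "\<not> Dnm_path_edge n m j i"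
    using that n m unfolding Dnm_path_edge_def Dnm_adj_def Dnm_path_proj_def
    by (auto simp: min_def max_def)
  have "\<not> (Dnm_path_edge n m i j \<and> Dnm_path_edge n m j i)" unfolding Dnm_path_edge_def by auto
  then show ?thesis
    using path_edge clique_edge unfolding Dnm_test_def Dnm_path_edge_def
    by (auto simp: power2_eq_square algebra_simps)
qed

lemma Dnm_test_energy:
  "dirichlet_energy (Dnm_size n m) (Dnm_adj n m) (Dnm_test n m) = 4 * real (m - 1)"
proof -
  define N where "N = Dnm_size n m"
  define I where "I i j = (if Dnm_path_edge n m i j then 1 else 0 :: real)" for i j
  have path: "n - 1 < n + m - 2" "n + m - 2 < N" using n m unfolding N_def Dnm_size_def by auto
  have row: "(\<Sum>j<N. I i j) = (if n - 1 \<le> i \<and> i < n + m - 2 then 1 else 0)" for i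
  proof -
    have "(\<Sum>j<N. I i j) = (\<Sum>j<N. if j = Suc i then (if n - 1 \<le> i \<and> i < n + m - 2 then 1 else 0) else 0)"
      unfolding I_def Dnm_path_edge_def by (intro sum.cong refl) auto
    also have "\<dots> = (if n - 1 \<le> i \<and> i < n + m - 2 then 1 else 0)" using path by (simp add: sum.delta)
    finally show ?thesis .
  qed
  have "{i \<in> {..<N}. n - 1 \<le> i \<and> i < n + m - 2} = {n - 1..<n + m - 2}" using path by auto
  then have "(\<Sum>i<N. \<Sum>j<N. I i j) = real (card {n - 1..<n + m - 2})"
    unfolding row by (simp add: sum.If_cases Int_def)
  also have "\<dots> = real (m - 1)" using n m by simp
  finally have count: "(\<Sum>i<N. \<Sum>j<N. I i j) = real (m - 1)" .
  have "(\<Sum>i<N. \<Sum>j<N. if Dnm_adj n m i j then (Dnm_test n m i - Dnm_test n m j)^2 else 0)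
      = 4 * (\<Sum>i<N. \<Sum>j<N. I i j) + 4 * (\<Sum>i<N. \<Sum>j<N. I j i)"
    unfolding Dnm_test_adj_square_diff I_def by (simp add: sum.distrib sum_distrib_left)
  also have "(\<Sum>i<N. \<Sum>j<N. I j i) = (\<Sum>i<N. \<Sum>j<N. I i j)" by (rule sum.swap)
  finally show ?thesis unfolding dirichlet_energy_def N_def[symmetric] count by simp
qed

lemma Dnm_test_rayleigh_quotient_le:
  "dirichlet_energy (Dnm_size n m) (Dnm_adj n m) (Dnm_test n m) / (\<Sum>i<Dnm_size n m. (Dnm_test n m i)^2)
     \<le> 12 / (6 * real (m - 1) * real (n - 1) + real m * real (m - 1))"
proof -
  define G where "G = (\<Sum>i<Dnm_size n m. (Dnm_test n m i)^2)"
  define D where "D = 6 * real (m - 1) * real (n - 1) + real m * real (m - 1)"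
  have G: "0 < G" unfolding G_def by (rule Dnm_test_sum_squares_pos)
  have D: "0 < D" unfolding D_def using m by (intro add_nonneg_pos) auto
  have "real m * real (m - 1) * real (m - 1) \<le> real m * real (m - 1) * real (m + 1)"
    by (intro mult_left_mono) auto
  then have "real (m - 1) * D \<le> 3 * G"
    unfolding G_def Dnm_test_sum_squares D_def by (simp add: power2_eq_square algebra_simps)
  then have key: "4 * (real (m - 1) * D) \<le> 12 * G" by linarith
  have "4 * real (m - 1) / G = 4 * (real (m - 1) * D) / (G * D)" using D by simp
  also have "\<dots> \<le> 12 * G / (G * D)" using key G D by (intro divide_right_mono) auto
  also have "\<dots> = 12 / D" using G by simp
  finally show ?thesis unfolding Dnm_test_energy G_def[symmetric] D_def[symmetric] .
qed

end

theorem theorem4p1: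
  fixes n m :: nat
  assumes "n \<ge> 1" and "m \<ge> 2"
  shows "2 / (real (2*n + m - 3) * real (m + 1))
           \<le> lambda2 (laplacian (Dnm_size n m) (Dnm_adj n m)) \<and>
         lambda2 (laplacian (Dnm_size n m) (Dnm_adj n m))
           \<le> 12 / (6 * real (m - 1) * real (n - 1) + real m * real (m - 1))"
proof -
  have C: "0 < real (2 * n + m - 3) * real (m + 1) / 2" using assms by simp
  note bounds = lambda2_laplacian_bounds[OF Dnm_adj_sym Dnm_adj_irrefl C
      Dnm_poincare[OF assms] Dnm_test_sum[OF assms] Dnm_test_sum_squares_pos[OF assms]]
  show ?thesis
    using bounds Dnm_test_rayleigh_quotient_le[OF assms] by simp
qed

end
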